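(* For all integers $r,c,K$ there exists an integer $N$ such that the following holds. Let $G$ be a digraph with maximum out-degree at most $c$ and let $S,T\subseteq V(G)$ be such that $|T|\ge N$ and for all $t,t'\in T$ there exist a vertex $s=s(t,t')\in S$, a directed path of length at most $r$ from $s$ to $t$ and a directed path of length at most $r$ from $s$ to $t'$. Then $G$ contains a crown of order $K$ as a depth-$r$ minor.
   Context: The crown of order $K$, $S_K$, is the digraph with vertices $v_1,\dots,v_K$ and $v_{ij}$ ($1\le i<j\le K$) and arcs $(v_{ij},v_i),(v_{ij},v_j)$. Depth-$r$ minors: a digraph $H$ has a directed model in $G$ if there is a map $\delta$ assigning to each $v\in V(H)$ a subgraph $\delta(v)\subseteq G$ and to each arc $e$ of $H$ an arc $\delta(e)$ of $G$ with (1) branch sets pairwise disjoint; (2) if $e=(u,v)$ and $\delta(e)=(u',v')$ then $u'\in\delta(u)$, $v'\in\delta(v)$; (3) for each $v$, with $\mathrm{in}(\delta(v))$ (resp. $\mathrm{out}(\delta(v))$) the vertices of $\delta(v)$ lying on images of arcs entering (resp. leaving) $v$: every in-vertex reaches every out-vertex by a directed path in $\delta(v)$, some vertex of $\delta(v)$ reaches all out-vertices, and some vertex of $\delta(v)$ is reached from all in-vertices. $H$ is a depth-$r$ minor of $G$ if such a model exists in which all paths in the branch sets have length at most $r$. *)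

theory Defs
  imports Main
begin

text \<open>A directed path is a nonempty list of distinct vertices with consecutive
  vertices joined by arcs; its length is the number of arcs, i.e. length p - 1.\<close>

definition dipath :: "('a \<times> 'a) set \<Rightarrow> 'a list \<Rightarrow> bool" where
  "dipath E p \<longleftrightarrow> p \<noteq> [] \<and> distinct p \<and> successively (\<lambda>x y. (x, y) \<in> E) p"

definition digraph :: "'a set \<Rightarrow> ('a \<times> 'a) set \<Rightarrow> bool" where
  "digraph V E \<longleftrightarrow> finite V \<and> E \<subseteq> V \<times> V"

definition max_outdeg_le :: "'a set \<Rightarrow> ('a \<times> 'a) set \<Rightarrow> nat \<Rightarrow> bool" where
  "max_outdeg_le V E c \<longleftrightarrow> (\<forall>v\<in>V. card {w. (v, w) \<in> E} \<le> c)"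

definition path_le :: "('a \<times> 'a) set \<Rightarrow> nat \<Rightarrow> 'a \<Rightarrow> 'a \<Rightarrow> bool" where
  "path_le E r s t \<longleftrightarrow> (\<exists>p. dipath E p \<and> hd p = s \<and> last p = t \<and> length p - 1 \<le> r)"

definition path_in :: "'a set \<Rightarrow> ('a \<times> 'a) set \<Rightarrow> 'a \<Rightarrow> 'a \<Rightarrow> bool" where
  "path_in B A x y \<longleftrightarrow> (\<exists>p. dipath A p \<and> set p \<subseteq> B \<and> hd p = x \<and> last p = y)"

definition in_verts :: "('b \<times> 'b) set \<Rightarrow> (('b \<times> 'b) \<Rightarrow> ('a \<times> 'a)) \<Rightarrow> 'a set \<Rightarrow> 'b \<Rightarrow> 'a set" where
  "in_verts EH d Bv v = {x \<in> Bv. \<exists>e\<in>EH. snd e = v \<and> (x = fst (d e) \<or> x = snd (d e))}"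

definition out_verts :: "('b \<times> 'b) set \<Rightarrow> (('b \<times> 'b) \<Rightarrow> ('a \<times> 'a)) \<Rightarrow> 'a set \<Rightarrow> 'b \<Rightarrow> 'a set" where
  "out_verts EH d Bv v = {x \<in> Bv. \<exists>e\<in>EH. fst e = v \<and> (x = fst (d e) \<or> x = snd (d e))}"

definition directed_model ::
  "'b set \<Rightarrow> ('b \<times> 'b) set \<Rightarrow> 'a set \<Rightarrow> ('a \<times> 'a) set \<Rightarrow>
   ('b \<Rightarrow> 'a set) \<Rightarrow> ('b \<Rightarrow> ('a \<times> 'a) set) \<Rightarrow> (('b \<times> 'b) \<Rightarrow> ('a \<times> 'a)) \<Rightarrow> bool" where
  "directed_model VH EH V E B A d \<longleftrightarrow>
     (\<forall>v\<in>VH. B v \<subseteq> V \<and> A v \<subseteq> E \<inter> (B v \<times> B v))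
   \<and> (\<forall>u\<in>VH. \<forall>v\<in>VH. u \<noteq> v \<longrightarrow> B u \<inter> B v = {})
   \<and> (\<forall>e\<in>EH. d e \<in> E \<and> fst (d e) \<in> B (fst e) \<and> snd (d e) \<in> B (snd e))
   \<and> (\<forall>v\<in>VH.
        (\<forall>x\<in>in_verts EH d (B v) v. \<forall>y\<in>out_verts EH d (B v) v. path_in (B v) (A v) x y)
      \<and> (\<exists>z\<in>B v. \<forall>y\<in>out_verts EH d (B v) v. path_in (B v) (A v) z y)
      \<and> (\<exists>z\<in>B v. \<forall>x\<in>in_verts EH d (B v) v. path_in (B v) (A v) x z))"

definition depth_minor :: "nat \<Rightarrow> 'b set \<Rightarrow> ('b \<times> 'b) set \<Rightarrow> 'a set \<Rightarrow> ('a \<times> 'a) set \<Rightarrow> bool" where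
  "depth_minor r VH EH V E \<longleftrightarrow>
     (\<exists>B A d. directed_model VH EH V E B A d
        \<and> (\<forall>v\<in>VH. \<forall>p. dipath (A v) p \<and> set p \<subseteq> B v \<longrightarrow> length p - 1 \<le> r))"

text \<open>The crown S_K: vertices v_i = Inl i (1 \<le> i \<le> K) and v_ij = Inr (i,j)
  (1 \<le> i < j \<le> K), arcs (v_ij, v_i), (v_ij, v_j).\<close>
definition crown_pairs :: "nat \<Rightarrow> (nat \<times> nat) set" where
  "crown_pairs K = {(i, j). 1 \<le> i \<and> i < j \<and> j \<le> K}"

definition crown_V :: "nat \<Rightarrow> (nat + nat \<times> nat) set" where
  "crown_V K = Inl ` {1..K} \<union> Inr ` crown_pairs K"

definition crown_E :: "nat \<Rightarrow> ((nat + nat \<times> nat) \<times> (nat + nat \<times> nat)) set" where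
  "crown_E K = (\<Union>(i, j)\<in>crown_pairs K. {(Inr (i, j), Inl i), (Inr (i, j), Inl j)})"

end

(*
  At most 1 + c + ... + c^k vertices lie within distance k of any vertex. Fixing a common
  centre s(t, t') for each pair of terminals, a pair therefore forbids only boundedly many
  terminals (those within distance 2r of its centre) and a terminal boundedly many others (those
  within distance r of it), so Ramsey's theorem for triples yields terminals t_1, ..., t_K none of
  which is forbidden by another one or by a pair of others.

  For i < j the vertices y on shortest walks from s_ij to t_i that can still reach t_j within the
  remaining budget r - d(s_ij, y), together with their counterparts towards t_j, form the branch
  set of v_ij; the remaining ones (the tail) join the branch set of v_i. As t_i does not reach t_j
  within r, an arc leads from the core into the tail, realising the arc (v_ij, v_i). A vertex of a
  branch set reaches within r the terminals of its crown vertex and at most one more, owing to the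
  2r-separation from the centres, which makes the branch sets disjoint.
*)
theory Submission
  imports Defs "HOL-Library.Ramsey"
begin

fun reach_within :: "('a \<times> 'a) set \<Rightarrow> nat \<Rightarrow> 'a \<Rightarrow> 'a \<Rightarrow> bool" where
  "reach_within E 0 x y \<longleftrightarrow> x = y"
| "reach_within E (Suc k) x y \<longleftrightarrow> x = y \<or> (\<exists>w. (x, w) \<in> E \<and> reach_within E k w y)"

lemma reach_within_refl [simp]: "reach_within E k x x"
  by (cases k) auto

lemma reach_within_mono: "reach_within E k x y \<Longrightarrow> k \<le> l \<Longrightarrow> reach_within E l x y"
proof (induction k arbitrary: l x)
  case (Suc k)
  then obtain l' where "l = Suc l'" "k \<le> l'"
    by (cases l) auto
  with Suc show ?case
    by auto
qed simp

lemma reach_within_Cons: "(x, w) \<in> E \<Longrightarrow> reach_within E k w y \<Longrightarrow> reach_within E (Suc k) x y"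
  by auto

lemma reach_within_trans:
  "reach_within E k x y \<Longrightarrow> reach_within E l y z \<Longrightarrow> reach_within E (k + l) x z"
proof (induction k arbitrary: x)
  case (Suc k)
  show ?case
  proof (cases "x = y")
    case True
    from Suc.prems(2) have "reach_within E (Suc k + l) y z"
      by (rule reach_within_mono) simp
    with True show ?thesis by simp
  next
    case False
    with Suc show ?thesis
      by auto
  qed
qed simp

lemma reach_within_snoc: "reach_within E k x w \<Longrightarrow> (w, y) \<in> E \<Longrightarrow> reach_within E (Suc k) x y"
  using reach_within_trans[of E k x w 1 y] by auto

lemma reach_within_SucD:
  "reach_within E (Suc k) x y \<Longrightarrow> x \<noteq> y \<Longrightarrow> \<exists>w. reach_within E k x w \<and> (w, y) \<in> E"
proof (induction k arbitrary: x)
  case (Suc k)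
  then obtain w where w: "(x, w) \<in> E" "reach_within E (Suc k) w y"
    by auto
  show ?case
  proof (cases "w = y")
    case False
    with Suc.IH[OF w(2)] w(1) show ?thesis by auto
  qed (use w(1) in auto)
qed auto

lemma reach_within_closed: "reach_within E k x y \<Longrightarrow> E \<subseteq> V \<times> V \<Longrightarrow> x \<in> V \<Longrightarrow> y \<in> V"
  by (induction k arbitrary: x) auto

lemma dipath_reach_within: "dipath E p \<Longrightarrow> reach_within E (length p - 1) (hd p) (last p)"
proof (induction p)
  case (Cons x p)
  then show ?case
    by (cases p) (auto simp: dipath_def)
qed (simp add: dipath_def)

lemma path_le_imp_reach_within: "path_le E r s t \<Longrightarrow> reach_within E r s t"
  unfolding path_le_def using dipath_reach_within reach_within_mono by metis

lemma card_reach_within_le: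
  assumes "digraph V E" "max_outdeg_le V E c"
  shows "finite {y. reach_within E k x y} \<and> card {y. reach_within E k x y} \<le> (\<Sum>i\<le>k. c ^ i)"
proof -
  have fin: "finite V" and EV: "E \<subseteq> V \<times> V"
    using assms(1) unfolding digraph_def by auto
  show ?thesis
  proof (induction k arbitrary: x)
    case 0
    have "{y. reach_within E 0 x y} = {x}"
      by auto
    then show ?case by simp
  next
    case (Suc k)
    define N where "N = {w. (x, w) \<in> E}"
    have N: "finite N" "card N \<le> c"
    proof -
      show "finite N"
        by (rule finite_subset[OF _ fin]) (use EV in \<open>auto simp: N_def\<close>)
      show "card N \<le> c"
      proof (cases "x \<in> V")
        case False
        with EV have "N = {}" by (auto simp: N_def)
        then show ?thesis by simp
      qed (use assms(2) in \<open>auto simp: max_outdeg_le_def N_def\<close>)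
    qed
    have ball: "{y. reach_within E (Suc k) x y} = insert x (\<Union>w\<in>N. {y. reach_within E k w y})"
      by (auto simp: N_def)
    define U where "U = (\<Union>w\<in>N. {y. reach_within E k w y})"
    have U: "finite U"
      using N(1) Suc.IH by (simp add: U_def)
    have "card {y. reach_within E (Suc k) x y} \<le> Suc (card U)"
      unfolding ball U_def[symmetric] using U by (simp add: card_insert_if)
    also have "card U \<le> (\<Sum>w\<in>N. card {y. reach_within E k w y})"
      unfolding U_def by (rule card_UN_le[OF N(1)])
    also have "\<dots> \<le> (\<Sum>w\<in>N. \<Sum>i\<le>k. c ^ i)"
      by (rule sum_mono) (use Suc.IH in blast)
    also have "\<dots> \<le> c * (\<Sum>i\<le>k. c ^ i)"
      using N(2) by simp
    also have "Suc (c * (\<Sum>i\<le>k. c ^ i)) = (\<Sum>i\<le>Suc k. c ^ i)"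
      by (subst sum.atMost_Suc_shift) (simp add: sum_distrib_left)
    finally show ?case
      unfolding ball U_def[symmetric] using U by simp
  qed
qed

text \<open>Meaningful only when \<open>y\<close> is reachable from \<open>x\<close>; otherwise \<open>LEAST\<close> returns an unspecified value.\<close>

definition walk_dist :: "('a \<times> 'a) set \<Rightarrow> 'a \<Rightarrow> 'a \<Rightarrow> nat" where
  "walk_dist E x y = (LEAST k. reach_within E k x y)"

lemma reach_within_walk_dist: "reach_within E k x y \<Longrightarrow> reach_within E (walk_dist E x y) x y"
  unfolding walk_dist_def by (rule LeastI)

lemma walk_dist_le: "reach_within E k x y \<Longrightarrow> walk_dist E x y \<le> k"
  unfolding walk_dist_def by (rule Least_le)

lemma walk_dist_self [simp]: "walk_dist E x x = 0"
  using walk_dist_le[of E 0 x x] by simp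

lemma walk_dist_eq_0: "reach_within E k x y \<Longrightarrow> walk_dist E x y = 0 \<Longrightarrow> x = y"
  using reach_within_walk_dist[of E k x y] by simp

lemma walk_dist_triangle:
  "reach_within E k x y \<Longrightarrow> reach_within E l y z \<Longrightarrow> walk_dist E x z \<le> walk_dist E x y + walk_dist E y z"
  by (rule walk_dist_le, rule reach_within_trans[OF reach_within_walk_dist reach_within_walk_dist])

lemma walk_dist_SucD_first:
  assumes "reach_within E k x y" "walk_dist E x y = Suc m"
  shows "\<exists>w. (x, w) \<in> E \<and> reach_within E m w y \<and> walk_dist E w y = m"
proof -
  have r: "reach_within E (Suc m) x y"
    using reach_within_walk_dist[OF assms(1)] unfolding assms(2) .
  have "x \<noteq> y"
    using assms(2) by auto
  with r obtain w where w: "(x, w) \<in> E" "reach_within E m w y"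
    by auto
  have "Suc m \<le> Suc (walk_dist E w y)"
    using walk_dist_le[OF reach_within_Cons[OF w(1) reach_within_walk_dist[OF w(2)]]] unfolding assms(2) .
  with walk_dist_le[OF w(2)] w show ?thesis
    by auto
qed

lemma walk_dist_SucD_last:
  assumes "reach_within E k x y" "walk_dist E x y = Suc m"
  shows "\<exists>w. (w, y) \<in> E \<and> reach_within E m x w \<and> walk_dist E x w = m"
proof -
  have r: "reach_within E (Suc m) x y"
    using reach_within_walk_dist[OF assms(1)] unfolding assms(2) .
  have "x \<noteq> y"
    using assms(2) by auto
  then obtain w where w: "reach_within E m x w" "(w, y) \<in> E"
    using reach_within_SucD[OF r] by blast
  have "Suc m \<le> Suc (walk_dist E x w)"
    using walk_dist_le[OF reach_within_snoc[OF reach_within_walk_dist[OF w(1)] w(2)]] unfolding assms(2) .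
  with walk_dist_le[OF w(1)] w show ?thesis
    by auto
qed

definition geodesic :: "('a \<times> 'a) set \<Rightarrow> 'a \<Rightarrow> 'a \<Rightarrow> 'a set" where
  "geodesic E s a = {y. reach_within E (walk_dist E s a) s y \<and> reach_within E (walk_dist E s a) y a
     \<and> walk_dist E s y + walk_dist E y a = walk_dist E s a}"

lemma start_in_geodesic: "reach_within E k s a \<Longrightarrow> s \<in> geodesic E s a"
  unfolding geodesic_def using reach_within_walk_dist[of E k s a] by simp

lemma geodesic_walk_dist_le:
  assumes "y \<in> geodesic E s a" "reach_within E r s a"
  shows "walk_dist E s y \<le> r" "walk_dist E y a \<le> r"
  using assms(1) walk_dist_le[OF assms(2)] unfolding geodesic_def by auto

lemma geodesic_reach_from:
  assumes "y \<in> geodesic E s a" "reach_within E r s a"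
  shows "reach_within E r s y"
proof -
  have "reach_within E (walk_dist E s a) s y"
    using assms(1) unfolding geodesic_def by blast
  then show ?thesis
    by (rule reach_within_mono[OF _ walk_dist_le[OF assms(2)]])
qed

lemma geodesic_reach_to:
  assumes "y \<in> geodesic E s a" "reach_within E r s a"
  shows "reach_within E (r - walk_dist E s y) y a"
proof -
  have y: "reach_within E (walk_dist E s a) y a" "walk_dist E s y + walk_dist E y a = walk_dist E s a"
    using assms(1) unfolding geodesic_def by auto
  have "walk_dist E y a \<le> r - walk_dist E s y"
    using y(2) walk_dist_le[OF assms(2)] by linarith
  then show ?thesis
    by (rule reach_within_mono[OF reach_within_walk_dist[OF y(1)]])
qed

lemma geodesic_next:
  assumes "y \<in> geodesic E s a" "y \<noteq> a"
  shows "\<exists>y'. (y, y') \<in> E \<and> y' \<in> geodesic E s a \<and> walk_dist E s y' = Suc (walk_dist E s y)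
    \<and> walk_dist E y a = Suc (walk_dist E y' a)"
proof -
  have y: "reach_within E (walk_dist E s a) s y" "reach_within E (walk_dist E s a) y a"
      "walk_dist E s y + walk_dist E y a = walk_dist E s a"
    using assms(1) unfolding geodesic_def by auto
  obtain m where m: "walk_dist E y a = Suc m"
    using walk_dist_eq_0[OF y(2)] assms(2) by (cases "walk_dist E y a") auto
  obtain y' where y': "(y, y') \<in> E" "reach_within E m y' a" "walk_dist E y' a = m"
    using walk_dist_SucD_first[OF y(2) m] by blast
  have sy': "reach_within E (Suc (walk_dist E s y)) s y'"
    using reach_within_snoc[OF reach_within_walk_dist[OF y(1)] y'(1)] .
  have "walk_dist E s a \<le> walk_dist E s y' + walk_dist E y' a"
    using walk_dist_triangle[OF sy' y'(2)] .
  with walk_dist_le[OF sy'] y(3) m y'(3) have d: "walk_dist E s y' = Suc (walk_dist E s y)"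
    by linarith
  have "walk_dist E s y' \<le> walk_dist E s a" "m \<le> walk_dist E s a"
    using d y(3) m by linarith+
  then have "y' \<in> geodesic E s a"
    unfolding geodesic_def using d y(3) m y'(3)
      reach_within_mono[OF reach_within_walk_dist[OF sy']] reach_within_mono[OF y'(2)] by auto
  with y' d m show ?thesis
    by blast
qed

lemma geodesic_prev:
  assumes "y \<in> geodesic E s a" "y \<noteq> s"
  shows "\<exists>w. (w, y) \<in> E \<and> w \<in> geodesic E s a \<and> walk_dist E s y = Suc (walk_dist E s w)"
proof -
  have y: "reach_within E (walk_dist E s a) s y" "reach_within E (walk_dist E s a) y a"
      "walk_dist E s y + walk_dist E y a = walk_dist E s a"
    using assms(1) unfolding geodesic_def by auto
  obtain m where m: "walk_dist E s y = Suc m"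
    using walk_dist_eq_0[OF y(1)] assms(2) by (cases "walk_dist E s y") auto
  obtain w where w: "(w, y) \<in> E" "reach_within E m s w" "walk_dist E s w = m"
    using walk_dist_SucD_last[OF y(1) m] by blast
  have wa: "reach_within E (Suc (walk_dist E y a)) w a"
    using reach_within_Cons[OF w(1) reach_within_walk_dist[OF y(2)]] .
  have "walk_dist E s a \<le> walk_dist E s w + walk_dist E w a"
    using walk_dist_triangle[OF w(2) wa] .
  with walk_dist_le[OF wa] y(3) m w(3) have d: "walk_dist E w a = Suc (walk_dist E y a)"
    by linarith
  have "m \<le> walk_dist E s a" "walk_dist E w a \<le> walk_dist E s a"
    using d y(3) m by linarith+
  then have "w \<in> geodesic E s a"
    unfolding geodesic_def using d y(3) m w(3)
      reach_within_mono[OF w(2)] reach_within_mono[OF reach_within_walk_dist[OF wa]] by auto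
  with w m show ?thesis
    by blast
qed

lemma successively_Suc_levels:
  assumes "successively (\<lambda>x y. f y = Suc (f x)) p" "p \<noteq> []"
  shows "distinct p \<and> f (last p) = f (hd p) + (length p - 1)"
proof -
  have "distinct (x # q) \<and> (\<forall>y\<in>set q. f x < f y) \<and> f (last (x # q)) = f x + length q"
    if "successively (\<lambda>x y. f y = Suc (f x)) (x # q)" for x q
    using that
  proof (induction q arbitrary: x)
    case (Cons y q)
    then have "f y = Suc (f x)" "successively (\<lambda>x y. f y = Suc (f x)) (y # q)"
      by auto
    with Cons.IH[of y] show ?case
      by auto
  qed simp
  with assms show ?thesis
    by (cases p) auto
qed

lemma successively_Suc_levels_rev:
  assumes "successively (\<lambda>x y. f x = Suc (f y)) p" "p \<noteq> []"
  shows "distinct p \<and> f (hd p) = f (last p) + (length p - 1)"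
  using successively_Suc_levels[of f "rev p"] assms by (simp add: hd_rev last_rev)

definition geodesic_core :: "('a \<times> 'a) set \<Rightarrow> nat \<Rightarrow> 'a \<Rightarrow> 'a \<Rightarrow> 'a \<Rightarrow> 'a set" where
  "geodesic_core E r s a b = {y \<in> geodesic E s a. reach_within E (r - walk_dist E s y) y b}"

definition geodesic_tail :: "('a \<times> 'a) set \<Rightarrow> nat \<Rightarrow> 'a \<Rightarrow> 'a \<Rightarrow> 'a \<Rightarrow> 'a set" where
  "geodesic_tail E r s a b = {y \<in> geodesic E s a. \<not> reach_within E (r - walk_dist E s y) y b}"

lemma start_in_geodesic_core:
  "reach_within E r s a \<Longrightarrow> reach_within E r s b \<Longrightarrow> s \<in> geodesic_core E r s a b"
  unfolding geodesic_core_def using start_in_geodesic by fastforce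

lemma geodesic_tail_disjoint:
  assumes "reach_within E r s b"
  shows "geodesic_tail E r s a b \<inter> geodesic E s b = {}"
  using geodesic_reach_to[OF _ assms] unfolding geodesic_tail_def by blast

lemma geodesic_core_tail_arc:
  assumes "reach_within E r s a" "reach_within E r s b" "\<not> reach_within E r a b"
  shows "\<exists>x x'. (x, x') \<in> E \<and> x \<in> geodesic_core E r s a b \<and> x' \<in> geodesic_tail E r s a b"
proof -
  have "\<exists>x x'. (x, x') \<in> E \<and> x \<in> geodesic_core E r s a b \<and> x' \<in> geodesic_tail E r s a b"
    if "y \<in> geodesic_core E r s a b" for y
    using that
  proof (induction "walk_dist E y a" arbitrary: y rule: less_induct)
    case less
    have y: "y \<in> geodesic E s a" "reach_within E (r - walk_dist E s y) y b"
      using less.prems unfolding geodesic_core_def by auto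
    have "y \<noteq> a"
      using y(2) assms(3) reach_within_mono[of E _ a b r] by fastforce
    then obtain y' where y': "(y, y') \<in> E" "y' \<in> geodesic E s a"
        "walk_dist E y a = Suc (walk_dist E y' a)"
      using geodesic_next[OF y(1)] by blast
    show ?case
    proof (cases "y' \<in> geodesic_core E r s a b")
      case True
      from less.hyps[OF _ True] y'(3) show ?thesis by simp
    next
      case False
      with y'(2) have "y' \<in> geodesic_tail E r s a b"
        unfolding geodesic_core_def geodesic_tail_def by blast
      with y'(1) less.prems show ?thesis by blast
    qed
  qed
  then show ?thesis
    using start_in_geodesic_core[OF assms(1,2)] by blast
qed

lemma geodesic_core_path:
  assumes "reach_within E r s a" "y \<in> geodesic_core E r s a b"
  shows "\<exists>p. p \<noteq> [] \<and> hd p = s \<and> last p = y \<and> set p \<subseteq> geodesic_core E r s a b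
    \<and> successively (\<lambda>x y. (x, y) \<in> E \<and> walk_dist E s y = Suc (walk_dist E s x)) p"
  using assms(2)
proof (induction "walk_dist E s y" arbitrary: y rule: less_induct)
  case less
  have y: "y \<in> geodesic E s a" "reach_within E (r - walk_dist E s y) y b"
    using less.prems unfolding geodesic_core_def by auto
  show ?case
  proof (cases "y = s")
    case True
    with less.prems show ?thesis
      by (intro exI[of _ "[s]"]) auto
  next
    case False
    then obtain w where w: "(w, y) \<in> E" "w \<in> geodesic E s a" "walk_dist E s y = Suc (walk_dist E s w)"
      using geodesic_prev[OF y(1)] by blast
    have "r - walk_dist E s w = Suc (r - walk_dist E s y)"
      using geodesic_walk_dist_le(1)[OF y(1) assms(1)] w(3) by simp
    then have "w \<in> geodesic_core E r s a b"
      unfolding geodesic_core_def using w(2) reach_within_Cons[OF w(1) y(2)] by simp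
    then obtain p where p: "p \<noteq> []" "hd p = s" "last p = w" "set p \<subseteq> geodesic_core E r s a b"
        "successively (\<lambda>x y. (x, y) \<in> E \<and> walk_dist E s y = Suc (walk_dist E s x)) p"
      using less.hyps[of w] w(3) by auto
    show ?thesis
      using p w less.prems by (intro exI[of _ "p @ [y]"]) (auto simp: successively_append_iff)
  qed
qed

lemma geodesic_tail_path:
  assumes "reach_within E r s a" "y \<in> geodesic_tail E r s a b"
  shows "\<exists>p. p \<noteq> [] \<and> hd p = y \<and> last p = a \<and> set p \<subseteq> geodesic_tail E r s a b
    \<and> successively (\<lambda>x y. (x, y) \<in> E \<and> walk_dist E x a = Suc (walk_dist E y a)) p"
  using assms(2)
proof (induction "walk_dist E y a" arbitrary: y rule: less_induct)
  case less
  have y: "y \<in> geodesic E s a" "\<not> reach_within E (r - walk_dist E s y) y b"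
    using less.prems unfolding geodesic_tail_def by auto
  show ?case
  proof (cases "y = a")
    case True
    with less.prems show ?thesis
      by (intro exI[of _ "[a]"]) auto
  next
    case False
    then obtain y' where y': "(y, y') \<in> E" "y' \<in> geodesic E s a"
        "walk_dist E s y' = Suc (walk_dist E s y)" "walk_dist E y a = Suc (walk_dist E y' a)"
      using geodesic_next[OF y(1)] by blast
    have "r - walk_dist E s y = Suc (r - walk_dist E s y')"
      using geodesic_walk_dist_le(1)[OF y'(2) assms(1)] y'(3) by simp
    then have "y' \<in> geodesic_tail E r s a b"
      unfolding geodesic_tail_def using y'(2) y(2) reach_within_Cons[OF y'(1)] by auto
    then obtain p where p: "p \<noteq> []" "hd p = y'" "last p = a" "set p \<subseteq> geodesic_tail E r s a b"
        "successively (\<lambda>x y. (x, y) \<in> E \<and> walk_dist E x a = Suc (walk_dist E y a)) p"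
      using less.hyps[of y'] y'(4) by auto
    show ?thesis
      using p y' less.prems by (intro exI[of _ "y # p"]) (auto simp: successively_Cons)
  qed
qed

lemma dipath_ascending:
  assumes "successively (\<lambda>x y. (x, y) \<in> E \<and> f y = Suc (f x)) p" "p \<noteq> []" "set p \<subseteq> B"
  shows "dipath {(x, y) \<in> E. x \<in> B \<and> y \<in> B \<and> f y = Suc (f x)} p"
proof -
  have "successively (\<lambda>x y. f y = Suc (f x)) p"
    using assms(1) by (rule successively_mono) blast
  then have "distinct p"
    using successively_Suc_levels assms(2) by blast
  moreover have "successively (\<lambda>x y. (x, y) \<in> {(x, y) \<in> E. x \<in> B \<and> y \<in> B \<and> f y = Suc (f x)}) p"
    using assms(1) by (rule successively_mono) (use assms(3) in blast)
  ultimately show ?thesis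
    unfolding dipath_def using assms(2) by blast
qed

lemma dipath_descending:
  assumes "successively (\<lambda>x y. (x, y) \<in> E \<and> f x = Suc (f y)) p" "p \<noteq> []" "set p \<subseteq> B"
  shows "dipath {(x, y) \<in> E. x \<in> B \<and> y \<in> B \<and> f x = Suc (f y)} p"
proof -
  have "successively (\<lambda>x y. f x = Suc (f y)) p"
    using assms(1) by (rule successively_mono) blast
  then have "distinct p"
    using successively_Suc_levels_rev assms(2) by blast
  moreover have "successively (\<lambda>x y. (x, y) \<in> {(x, y) \<in> E. x \<in> B \<and> y \<in> B \<and> f x = Suc (f y)}) p"
    using assms(1) by (rule successively_mono) (use assms(3) in blast)
  ultimately show ?thesis
    unfolding dipath_def using assms(2) by blast
qed

lemma dipath_ascending_length_le:
  assumes "dipath A p" "\<And>x y. (x, y) \<in> A \<Longrightarrow> f y = Suc (f x)" "\<And>x. x \<in> set p \<Longrightarrow> f x \<le> r"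
  shows "length p - 1 \<le> r"
proof -
  have "p \<noteq> []" "successively (\<lambda>x y. f y = Suc (f x)) p"
    using assms(1,2) unfolding dipath_def by (auto elim: successively_mono)
  with assms(3)[of "last p"] show ?thesis
    using successively_Suc_levels by fastforce
qed

lemma dipath_descending_length_le:
  assumes "dipath A p" "\<And>x y. (x, y) \<in> A \<Longrightarrow> f x = Suc (f y)" "\<And>x. x \<in> set p \<Longrightarrow> f x \<le> r"
  shows "length p - 1 \<le> r"
proof -
  have "p \<noteq> []" "successively (\<lambda>x y. f x = Suc (f y)) p"
    using assms(1,2) unfolding dipath_def by (auto elim: successively_mono)
  with assms(3)[of "hd p"] show ?thesis
    using successively_Suc_levels_rev by fastforce
qed

lemma crown_V_cases:
  assumes "v \<in> crown_V K"
  obtains i where "v = Inl i" "i \<in> {1..K}"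
  | i j where "v = Inr (i, j)" "i \<in> {1..K}" "j \<in> {1..K}" "i < j"
  using assms unfolding crown_V_def crown_pairs_def by auto

lemma crown_E_cases:
  assumes "e \<in> crown_E K"
  obtains i j k where "e = (Inr (i, j), Inl k)" "i \<in> {1..K}" "j \<in> {1..K}" "i < j" "k = i \<or> k = j"
  using assms unfolding crown_E_def crown_pairs_def by auto

lemma out_verts_crown_Inl: "out_verts (crown_E K) d B (Inl i) = {}"
  unfolding out_verts_def by (auto elim: crown_E_cases)

lemma in_verts_crown_Inr: "in_verts (crown_E K) d B (Inr p) = {}"
  unfolding in_verts_def by (auto elim: crown_E_cases)

lemma path_in_singleton: "x \<in> B \<Longrightarrow> path_in B A x x"
  unfolding path_in_def dipath_def by (intro exI[of _ "[x]"]) simp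

locale crown_centres =
  fixes V :: "'a set" and E :: "('a \<times> 'a) set" and r K :: nat
    and t :: "nat \<Rightarrow> 'a" and s :: "nat \<Rightarrow> nat \<Rightarrow> 'a"
  assumes arcs_closed: "E \<subseteq> V \<times> V"
    and terminal_in_V: "i \<in> {1..K} \<Longrightarrow> t i \<in> V"
    and centre_in_V: "i \<in> {1..K} \<Longrightarrow> j \<in> {1..K} \<Longrightarrow> i \<noteq> j \<Longrightarrow> s i j \<in> V"
    and centre_sym: "s i j = s j i"
    and centre_reach: "i \<in> {1..K} \<Longrightarrow> j \<in> {1..K} \<Longrightarrow> i \<noteq> j \<Longrightarrow> reach_within E r (s i j) (t i)"
    and centre_far: "i \<in> {1..K} \<Longrightarrow> j \<in> {1..K} \<Longrightarrow> k \<in> {1..K} \<Longrightarrow> i \<noteq> j \<Longrightarrow> k \<noteq> i \<Longrightarrow> k \<noteq> j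
      \<Longrightarrow> \<not> reach_within E (2 * r) (s i j) (t k)"
    and terminals_apart: "i \<in> {1..K} \<Longrightarrow> j \<in> {1..K} \<Longrightarrow> i \<noteq> j \<Longrightarrow> \<not> reach_within E r (t i) (t j)"
begin

text \<open>Inside a branch set only
  arcs that advance by one along the geodesics are kept, so its directed paths have length at
  most \<open>r\<close>.\<close>

definition core :: "nat \<Rightarrow> nat \<Rightarrow> 'a set" where
  "core i j = geodesic_core E r (s i j) (t i) (t j) \<union> geodesic_core E r (s i j) (t j) (t i)"

definition tail :: "nat \<Rightarrow> nat \<Rightarrow> 'a set" where
  "tail i j = geodesic_tail E r (s i j) (t i) (t j)"

fun branch :: "nat + nat \<times> nat \<Rightarrow> 'a set" where
  "branch (Inl i) = insert (t i) (\<Union>j\<in>{1..K} - {i}. tail i j)"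
| "branch (Inr (i, j)) = core i j"

fun branch_arcs :: "nat + nat \<times> nat \<Rightarrow> ('a \<times> 'a) set" where
  "branch_arcs (Inl i) = {(x, y) \<in> E. x \<in> branch (Inl i) \<and> y \<in> branch (Inl i)
     \<and> walk_dist E x (t i) = Suc (walk_dist E y (t i))}"
| "branch_arcs (Inr (i, j)) = {(x, y) \<in> E. x \<in> core i j \<and> y \<in> core i j
     \<and> walk_dist E (s i j) y = Suc (walk_dist E (s i j) x)}"

definition arc_image :: "(nat + nat \<times> nat) \<times> (nat + nat \<times> nat) \<Rightarrow> 'a \<times> 'a" where
  "arc_image e = (SOME a. a \<in> E \<and> fst a \<in> branch (fst e) \<and> snd a \<in> branch (snd e))"

text \<open>The terminals reached within \<open>r\<close> determine which branch set a vertex can belong to.\<close>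

definition reached :: "'a \<Rightarrow> nat set" where
  "reached y = {k \<in> {1..K}. reach_within E r y (t k)}"

lemma core_sym: "core i j = core j i"
  unfolding core_def centre_sym[of j i] by (rule Un_commute)

lemma centre_reach_snd: "i \<in> {1..K} \<Longrightarrow> j \<in> {1..K} \<Longrightarrow> i \<noteq> j \<Longrightarrow> reach_within E r (s i j) (t j)"
  using centre_reach[of j i] centre_sym[of i j] by simp

lemma tail_subset_geodesic: "tail i j \<subseteq> geodesic E (s i j) (t i)"
  unfolding tail_def geodesic_tail_def by blast

lemma core_subset_geodesics: "core i j \<subseteq> geodesic E (s i j) (t i) \<union> geodesic E (s i j) (t j)"
  unfolding core_def geodesic_core_def by blast

lemma centre_in_core: "i \<in> {1..K} \<Longrightarrow> j \<in> {1..K} \<Longrightarrow> i \<noteq> j \<Longrightarrow> s i j \<in> core i j"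
  unfolding core_def using start_in_geodesic_core[OF centre_reach centre_reach_snd] by blast

lemma geodesic_reached:
  assumes "i \<in> {1..K}" "j \<in> {1..K}" "i \<noteq> j" "y \<in> geodesic E (s i j) (t i)"
  shows "reached y \<subseteq> {i, j}"
proof
  fix k assume "k \<in> reached y"
  then have k: "k \<in> {1..K}" "reach_within E r y (t k)"
    unfolding reached_def by auto
  have "reach_within E (2 * r) (s i j) (t k)"
    using reach_within_trans[OF geodesic_reach_from[OF assms(4) centre_reach[OF assms(1-3)]] k(2)]
    by (simp add: mult_2)
  with centre_far[OF assms(1,2) k(1) assms(3)] show "k \<in> {i, j}"
    by blast
qed

lemma reached_core:
  assumes "i \<in> {1..K}" "j \<in> {1..K}" "i \<noteq> j" "y \<in> core i j"
  shows "reached y = {i, j}"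
proof -
  have both: "reached y = {i, j}"
    if "a \<in> {1..K}" "b \<in> {1..K}" "a \<noteq> b" "y \<in> geodesic_core E r (s a b) (t a) (t b)"
      "{a, b} = {i, j}" for a b
  proof -
    have y: "y \<in> geodesic E (s a b) (t a)" "reach_within E (r - walk_dist E (s a b) y) y (t b)"
      using that(4) unfolding geodesic_core_def by auto
    have "reach_within E r y (t a)"
      using reach_within_mono[OF geodesic_reach_to[OF y(1) centre_reach[OF that(1-3)]]] by simp
    moreover have "reach_within E r y (t b)"
      using reach_within_mono[OF y(2)] by simp
    ultimately have "{a, b} \<subseteq> reached y"
      using that(1,2) unfolding reached_def by auto
    with geodesic_reached[OF that(1-3) y(1)] that(5) show ?thesis
      by blast
  qed
  from assms(4) consider "y \<in> geodesic_core E r (s i j) (t i) (t j)"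
    | "y \<in> geodesic_core E r (s j i) (t j) (t i)"
    unfolding core_def using centre_sym[of i j] by auto
  then show ?thesis
    by cases (use both[of i j] both[of j i] assms(1-3) in auto)
qed

lemma reached_tail:
  assumes "i \<in> {1..K}" "j \<in> {1..K}" "i \<noteq> j" "y \<in> tail i j"
  shows "i \<in> reached y" "reached y \<subseteq> {i, j}"
proof -
  have y: "y \<in> geodesic E (s i j) (t i)"
    using assms(4) tail_subset_geodesic by blast
  show "i \<in> reached y"
    using reach_within_mono[OF geodesic_reach_to[OF y centre_reach[OF assms(1-3)]]] assms(1)
    unfolding reached_def by simp
  show "reached y \<subseteq> {i, j}"
    by (rule geodesic_reached[OF assms(1-3) y])
qed

lemma reached_terminal: "i \<in> {1..K} \<Longrightarrow> reached (t i) = {i}"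
  unfolding reached_def using terminals_apart[of i] by auto

lemma branch_Inl_reached:
  assumes "i \<in> {1..K}" "y \<in> branch (Inl i)"
  shows "i \<in> reached y" "k \<in> reached y \<Longrightarrow> k \<noteq> i \<Longrightarrow> y \<in> tail i k"
proof -
  from assms(2) have "y = t i \<or> (\<exists>j\<in>{1..K} - {i}. y \<in> tail i j)"
    by simp
  then consider "y = t i" | j where "j \<in> {1..K}" "j \<noteq> i" "y \<in> tail i j"
    by blast
  note cases = this
  show "i \<in> reached y"
  proof (cases rule: cases)
    case 1
    then show ?thesis using reached_terminal[OF assms(1)] by simp
  next
    case (2 j)
    then show ?thesis using reached_tail(1)[OF assms(1) 2(1) 2(2)[symmetric] 2(3)] by simp
  qed
  show "y \<in> tail i k" if k: "k \<in> reached y" "k \<noteq> i"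
  proof (cases rule: cases)
    case 1
    then show ?thesis using reached_terminal[OF assms(1)] k by simp
  next
    case (2 j)
    then have "k = j"
      using reached_tail(2)[OF assms(1) 2(1) 2(2)[symmetric] 2(3)] k by blast
    with 2 show ?thesis by simp
  qed
qed

lemma tail_disjoint_geodesic:
  "i \<in> {1..K} \<Longrightarrow> j \<in> {1..K} \<Longrightarrow> i \<noteq> j \<Longrightarrow> tail i j \<inter> geodesic E (s i j) (t j) = {}"
  unfolding tail_def by (rule geodesic_tail_disjoint[OF centre_reach_snd])

lemma tail_disjoint_core:
  assumes "i \<in> {1..K}" "j \<in> {1..K}" "i \<noteq> j"
  shows "tail i j \<inter> core i j = {}"
proof -
  have "tail i j \<inter> geodesic_core E r (s i j) (t i) (t j) = {}"
    unfolding tail_def geodesic_core_def geodesic_tail_def by blast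
  moreover have "geodesic_core E r (s i j) (t j) (t i) \<subseteq> geodesic E (s i j) (t j)"
    unfolding geodesic_core_def by blast
  ultimately show ?thesis
    using tail_disjoint_geodesic[OF assms] unfolding core_def by blast
qed

lemma tail_disjoint_tail:
  assumes "i \<in> {1..K}" "j \<in> {1..K}" "i \<noteq> j"
  shows "tail i j \<inter> tail j i = {}"
proof -
  have "tail j i \<subseteq> geodesic E (s i j) (t j)"
    using tail_subset_geodesic[of j i] unfolding centre_sym[of j i] .
  then show ?thesis
    using tail_disjoint_geodesic[OF assms] by blast
qed

lemma branches_disjoint:
  assumes "u \<in> crown_V K" "v \<in> crown_V K" "u \<noteq> v"
  shows "branch u \<inter> branch v = {}"
proof (rule ccontr)
  assume "branch u \<inter> branch v \<noteq> {}"
  then obtain y where y: "y \<in> branch u" "y \<in> branch v"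
    by blast
  have Inl_Inl: False if i: "i \<in> {1..K}" "i' \<in> {1..K}" "i \<noteq> i'"
      and y: "y \<in> branch (Inl i)" "y \<in> branch (Inl i')" for i i'
  proof -
    have "y \<in> tail i i'"
      using branch_Inl_reached(2)[OF i(1) y(1) branch_Inl_reached(1)[OF i(2) y(2)]] i(3) by simp
    moreover have "y \<in> tail i' i"
      using branch_Inl_reached(2)[OF i(2) y(2) branch_Inl_reached(1)[OF i(1) y(1)]] i(3) by simp
    ultimately show False
      using tail_disjoint_tail[OF i] by blast
  qed
  have Inl_Inr: False if i: "i \<in> {1..K}" and pq: "p \<in> {1..K}" "q \<in> {1..K}" "p < q"
      and y: "y \<in> branch (Inl i)" "y \<in> branch (Inr (p, q))" for i p q
  proof -
    have R: "reached y = {p, q}"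
      using reached_core[OF pq(1,2)] pq(3) y(2) by simp
    obtain k where k: "k \<in> {p, q}" "k \<noteq> i"
      using pq(3) by blast
    have kK: "k \<in> {1..K}"
      using k(1) pq(1,2) by blast
    have tl: "y \<in> tail i k"
      using branch_Inl_reached(2)[OF i y(1)] R k by blast
    have "i \<in> {p, q}"
      using branch_Inl_reached(1)[OF i y(1)] R by blast
    with k pq(3) have "{p, q} = {i, k}"
      by auto
    then have "y \<in> core i k"
      using y(2) core_sym[of i k] by (auto simp: doubleton_eq_iff)
    then show False
      using tail_disjoint_core[OF i kK k(2)[symmetric]] tl by blast
  qed
  have Inr_Inr: False if pq: "p \<in> {1..K}" "q \<in> {1..K}" "p < q"
      and pq': "p' \<in> {1..K}" "q' \<in> {1..K}" "p' < q'" and ne: "(p, q) \<noteq> (p', q')"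
      and y: "y \<in> branch (Inr (p, q))" "y \<in> branch (Inr (p', q'))" for p q p' q'
  proof -
    have "reached y = {p, q}" "reached y = {p', q'}"
      using reached_core[OF pq(1,2) _ y(1)[unfolded branch.simps]]
        reached_core[OF pq'(1,2) _ y(2)[unfolded branch.simps]] pq(3) pq'(3) by simp_all
    then have "{p, q} = {p', q'}"
      by simp
    with pq(3) pq'(3) ne show False
      by (auto simp: doubleton_eq_iff)
  qed
  from assms(1) show False
  proof (cases rule: crown_V_cases)
    case u: (1 i)
    from assms(2) show False
    proof (cases rule: crown_V_cases)
      case (1 i')
      with u y assms(3) show False
        using Inl_Inl[of i i'] by auto
    next
      case (2 p q)
      with u y show False
        using Inl_Inr[of i p q] by auto
    qed
  next
    case u: (2 p q)
    from assms(2) show False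
    proof (cases rule: crown_V_cases)
      case (1 i)
      with u y show False
        using Inl_Inr[of i p q] by auto
    next
      case (2 p' q')
      with u y assms(3) show False
        using Inr_Inr[of p q p' q'] by auto
    qed
  qed
qed

lemma geodesic_from_centre_subset_V:
  assumes "i \<in> {1..K}" "j \<in> {1..K}" "i \<noteq> j"
  shows "geodesic E (s i j) (t i) \<subseteq> V"
proof
  fix y assume "y \<in> geodesic E (s i j) (t i)"
  from geodesic_reach_from[OF this centre_reach[OF assms]] show "y \<in> V"
    by (rule reach_within_closed[OF _ arcs_closed centre_in_V[OF assms]])
qed

lemma branch_subset_V:
  assumes "v \<in> crown_V K"
  shows "branch v \<subseteq> V"
  using assms
proof (cases rule: crown_V_cases)
  case (1 i)
  have "tail i j \<subseteq> V" if "j \<in> {1..K} - {i}" for j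
    using tail_subset_geodesic geodesic_from_centre_subset_V[of i j] 1(2) that by blast
  then have "(\<Union>j\<in>{1..K} - {i}. tail i j) \<subseteq> V"
    by (rule UN_least)
  with 1 terminal_in_V show ?thesis
    by simp
next
  case (2 i j)
  then show ?thesis
    using core_subset_geodesics[of i j] geodesic_from_centre_subset_V[of i j]
      geodesic_from_centre_subset_V[of j i] centre_sym[of j i] by auto
qed

lemma branch_arcs_subset: "branch_arcs v \<subseteq> E \<inter> (branch v \<times> branch v)"
  by (cases v rule: branch_arcs.cases) auto

lemma path_to_terminal:
  assumes "i \<in> {1..K}" "x \<in> branch (Inl i)"
  shows "path_in (branch (Inl i)) (branch_arcs (Inl i)) x (t i)"
proof -
  from assms(2) have "x = t i \<or> (\<exists>j\<in>{1..K} - {i}. x \<in> tail i j)"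
    by simp
  then show ?thesis
  proof
    assume "x = t i"
    then show ?thesis
      by (simp add: path_in_singleton)
  next
    assume "\<exists>j\<in>{1..K} - {i}. x \<in> tail i j"
    then obtain j where j: "j \<in> {1..K}" "j \<noteq> i" "x \<in> tail i j"
      by blast
    then obtain p where p: "p \<noteq> []" "hd p = x" "last p = t i" "set p \<subseteq> tail i j"
        "successively (\<lambda>x y. (x, y) \<in> E \<and> walk_dist E x (t i) = Suc (walk_dist E y (t i))) p"
      using geodesic_tail_path[OF centre_reach[OF assms(1) j(1) j(2)[symmetric]]] unfolding tail_def by blast
    have "set p \<subseteq> branch (Inl i)"
      using p(4) j(1,2) by auto
    with p have "dipath (branch_arcs (Inl i)) p"
      using dipath_descending[of E "\<lambda>x. walk_dist E x (t i)" p "branch (Inl i)"] by simp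
    with p \<open>set p \<subseteq> branch (Inl i)\<close> show ?thesis
      unfolding path_in_def by blast
  qed
qed

lemma path_from_centre:
  assumes "i \<in> {1..K}" "j \<in> {1..K}" "i \<noteq> j" "y \<in> core i j"
  shows "path_in (core i j) (branch_arcs (Inr (i, j))) (s i j) y"
proof -
  have "path_in (core i j) (branch_arcs (Inr (i, j))) (s i j) y"
    if ab: "reach_within E r (s i j) a" "y \<in> geodesic_core E r (s i j) a b"
      "geodesic_core E r (s i j) a b \<subseteq> core i j" for a b
  proof -
    obtain p where p: "p \<noteq> []" "hd p = s i j" "last p = y" "set p \<subseteq> geodesic_core E r (s i j) a b"
        "successively (\<lambda>x y. (x, y) \<in> E \<and> walk_dist E (s i j) y = Suc (walk_dist E (s i j) x)) p"
      using geodesic_core_path[OF ab(1,2)] by blast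
    have "set p \<subseteq> core i j"
      using p(4) ab(3) by blast
    with p have "dipath (branch_arcs (Inr (i, j))) p"
      using dipath_ascending[of E "walk_dist E (s i j)" p "core i j"] by simp
    with p \<open>set p \<subseteq> core i j\<close> show ?thesis
      unfolding path_in_def by blast
  qed
  with assms(4) centre_reach[OF assms(1-3)] centre_reach_snd[OF assms(1-3)] show ?thesis
    unfolding core_def by blast
qed

lemma branch_depth:
  assumes "v \<in> crown_V K" "dipath (branch_arcs v) p" "set p \<subseteq> branch v"
  shows "length p - 1 \<le> r"
  using assms(1)
proof (cases rule: crown_V_cases)
  case (1 i)
  have "walk_dist E x (t i) \<le> r" if "x \<in> branch (Inl i)" for x
  proof -
    from that have "x = t i \<or> (\<exists>j\<in>{1..K} - {i}. x \<in> tail i j)"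
      by simp
    then show ?thesis
      using geodesic_walk_dist_le(2)[OF _ centre_reach] tail_subset_geodesic 1(2) by fastforce
  qed
  with 1 assms(2,3) show ?thesis
    by (intro dipath_descending_length_le[of "branch_arcs (Inl i)" p "\<lambda>x. walk_dist E x (t i)"]) auto
next
  case (2 i j)
  have "walk_dist E (s i j) y \<le> r" if "y \<in> core i j" for y
    using that core_subset_geodesics[of i j] 2(2-4)
      geodesic_walk_dist_le(1)[OF _ centre_reach[of i j]] geodesic_walk_dist_le(1)[OF _ centre_reach_snd[of i j]]
    by fastforce
  with 2 assms(2,3) show ?thesis
    by (intro dipath_ascending_length_le[of "branch_arcs (Inr (i, j))" p "walk_dist E (s i j)"]) auto
qed

lemma core_tail_arc:
  assumes "i \<in> {1..K}" "j \<in> {1..K}" "i \<noteq> j"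
  shows "\<exists>x x'. (x, x') \<in> E \<and> x \<in> core i j \<and> x' \<in> tail i j"
  using geodesic_core_tail_arc[OF centre_reach[OF assms] centre_reach_snd[OF assms] terminals_apart[OF assms]]
  unfolding core_def tail_def by blast

lemma arc_image_in_branches:
  assumes "e \<in> crown_E K"
  shows "arc_image e \<in> E \<and> fst (arc_image e) \<in> branch (fst e) \<and> snd (arc_image e) \<in> branch (snd e)"
proof -
  obtain i j k where e: "e = (Inr (i, j), Inl k)" "i \<in> {1..K}" "j \<in> {1..K}" "i < j" "k = i \<or> k = j"
    using assms by (rule crown_E_cases)
  obtain k' where k': "{k, k'} = {i, j}" "k \<noteq> k'" "k' \<in> {1..K}"
    using e(2-5) by (metis doubleton_eq_iff less_irrefl insert_commute)
  have k: "k \<in> {1..K}"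
    using e(2,3,5) by blast
  obtain x x' where x: "(x, x') \<in> E" "x \<in> core k k'" "x' \<in> tail k k'"
    using core_tail_arc[OF k k'(3,2)] by blast
  have "core k k' = core i j"
    using k'(1) core_sym by (auto simp: doubleton_eq_iff)
  with x k'(2,3) have "\<exists>a. a \<in> E \<and> fst a \<in> branch (fst e) \<and> snd a \<in> branch (snd e)"
    unfolding e(1) by (intro exI[of _ "(x, x')"]) auto
  then show ?thesis
    unfolding arc_image_def by (rule someI_ex)
qed

lemma branch_paths:
  assumes "v \<in> crown_V K"
  shows "(\<forall>x\<in>in_verts (crown_E K) arc_image (branch v) v. \<forall>y\<in>out_verts (crown_E K) arc_image (branch v) v.
          path_in (branch v) (branch_arcs v) x y)
      \<and> (\<exists>z\<in>branch v. \<forall>y\<in>out_verts (crown_E K) arc_image (branch v) v. path_in (branch v) (branch_arcs v) z y)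
      \<and> (\<exists>z\<in>branch v. \<forall>x\<in>in_verts (crown_E K) arc_image (branch v) v. path_in (branch v) (branch_arcs v) x z)"
  using assms
proof (cases rule: crown_V_cases)
  case (1 i)
  have "out_verts (crown_E K) arc_image (branch v) v = {}"
    unfolding 1(1) by (rule out_verts_crown_Inl)
  moreover have "t i \<in> branch v"
    unfolding 1(1) by simp
  moreover have "\<forall>x\<in>in_verts (crown_E K) arc_image (branch v) v. path_in (branch v) (branch_arcs v) x (t i)"
    using path_to_terminal[OF 1(2)] unfolding 1(1) in_verts_def by blast
  ultimately show ?thesis
    by blast
next
  case (2 i j)
  have "in_verts (crown_E K) arc_image (branch v) v = {}"
    unfolding 2(1) by (rule in_verts_crown_Inr)
  moreover have "s i j \<in> branch v"
    using centre_in_core[OF 2(2,3)] 2(4) unfolding 2(1) by simp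
  moreover have "\<forall>y\<in>out_verts (crown_E K) arc_image (branch v) v. path_in (branch v) (branch_arcs v) (s i j) y"
    using path_from_centre[OF 2(2,3)] 2(4) unfolding 2(1) out_verts_def by simp
  ultimately show ?thesis
    by blast
qed

theorem crown_depth_minor: "depth_minor r (crown_V K) (crown_E K) V E"
  unfolding depth_minor_def directed_model_def
proof (intro exI conjI)
  show "\<forall>v\<in>crown_V K. branch v \<subseteq> V \<and> branch_arcs v \<subseteq> E \<inter> (branch v \<times> branch v)"
    using branch_subset_V branch_arcs_subset by blast
  show "\<forall>u\<in>crown_V K. \<forall>v\<in>crown_V K. u \<noteq> v \<longrightarrow> branch u \<inter> branch v = {}"
    using branches_disjoint by blast
  show "\<forall>e\<in>crown_E K. arc_image e \<in> E \<and> fst (arc_image e) \<in> branch (fst e) \<and> snd (arc_image e) \<in> branch (snd e)"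
    using arc_image_in_branches by blast
  show "\<forall>v\<in>crown_V K. \<forall>p. dipath (branch_arcs v) p \<and> set p \<subseteq> branch v \<longrightarrow> length p - 1 \<le> r"
    using branch_depth by blast
qed (use branch_paths in blast)

end

lemma Min_Max_three:
  fixes a b c :: nat
  assumes "a < b" "b < c"
  shows "Min {a, b, c} = a" "Max {a, b, c} = c" "Min ({a, b, c} - {a}) = b"
proof -
  have "{a, b, c} - {a} = {b, c}"
    using assms by auto
  with assms show "Min {a, b, c} = a" "Max {a, b, c} = c" "Min ({a, b, c} - {a}) = b"
    by (simp_all add: min_def max_def)
qed

lemma ramsey_ordered_triples:
  fixes n m :: nat
  obtains N where "\<And>f :: nat \<Rightarrow> nat \<Rightarrow> nat \<Rightarrow> nat. (\<And>a b c. f a b c < n) \<Longrightarrow>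
    \<exists>H\<subseteq>{..<N}. card H = m \<and> (\<exists>i. \<forall>a\<in>H. \<forall>b\<in>H. \<forall>c\<in>H. a < b \<longrightarrow> b < c \<longrightarrow> f a b c = i)"
proof -
  obtain N :: nat where N: "partn_lst {..<N} (replicate n m) 3"
    using ramsey_full by blast
  show thesis
  proof (rule that)
    fix f :: "nat \<Rightarrow> nat \<Rightarrow> nat \<Rightarrow> nat"
    assume f: "\<And>a b c. f a b c < n"
    define col where "col S = f (Min S) (Min (S - {Min S})) (Max S)" for S
    have "col \<in> nsets {..<N} 3 \<rightarrow> {..<length (replicate n m)}"
      using f by (simp add: col_def)
    then obtain i where "i < n" "monochromatic {..<N} m 3 col i"
      using N unfolding partn_lst_def by auto
    then obtain H where H: "H \<in> nsets {..<N} m" "col ` nsets H 3 \<subseteq> {i}"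
      unfolding monochromatic_def by blast
    have Hm: "H \<subseteq> {..<N}" "card H = m"
      using H(1) unfolding nsets_def by auto
    have "f a b c = i" if "a < b" "b < c" "a \<in> H" "b \<in> H" "c \<in> H" for a b c
    proof -
      have "{a, b, c} \<in> nsets H 3"
        using that by (auto simp: nsets_def card_insert_if)
      with H(2) have "col {a, b, c} = i"
        by blast
      then show ?thesis
        unfolding col_def Min_Max_three[OF that(1,2)] .
    qed
    with Hm show "\<exists>H\<subseteq>{..<N}. card H = m \<and> (\<exists>i. \<forall>a\<in>H. \<forall>b\<in>H. \<forall>c\<in>H. a < b \<longrightarrow> b < c \<longrightarrow> f a b c = i)"
      by (intro exI[of _ H] conjI exI[of _ i]) auto
  qed
qed

lemma card_le_pinned_pair:
  assumes "finite H" "a \<in> H" "b \<in> H" "a \<noteq> b" "inj_on t H" "finite Z"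
    and "\<And>x. x \<in> H - {a, b} \<Longrightarrow> t x \<in> Z"
  shows "card H \<le> card Z + 2"
proof -
  have "card H - 2 = card (t ` (H - {a, b}))"
    using assms(1-4) inj_on_subset[OF assms(5), of "H - {a, b}"] by (simp add: card_image card_Diff_subset)
  also have "\<dots> \<le> card Z"
    using assms(6,7) by (intro card_mono) auto
  finally show ?thesis
    by linarith
qed

lemma two_largest:
  fixes H :: "nat set"
  assumes "finite H" "2 \<le> card H"
  obtains a b where "a \<in> H" "b \<in> H" "a < b" "\<And>x. x \<in> H - {a, b} \<Longrightarrow> x < a"
proof -
  define b where "b = Max H"
  define a where "a = Max (H - {b})"
  have "H - {b} \<noteq> {}"
    using assms card_mono[of "{b}" H] by auto
  have ab: "b \<in> H" "a \<in> H - {b}"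
  proof -
    show "b \<in> H"
      unfolding b_def using assms(1) \<open>H - {b} \<noteq> {}\<close> by (intro Max_in) auto
    show "a \<in> H - {b}"
      unfolding a_def using assms(1) \<open>H - {b} \<noteq> {}\<close> by (intro Max_in) simp_all
  qed
  have "x \<le> a" if "x \<in> H - {b}" for x
    using assms(1) that unfolding a_def by simp
  moreover have "a \<le> b"
    using assms(1) ab(2) unfolding b_def by simp
  ultimately show thesis
    using that[of a b] ab by force
qed

lemma two_smallest:
  fixes H :: "nat set"
  assumes "finite H" "2 \<le> card H"
  obtains a b where "a \<in> H" "b \<in> H" "a < b" "\<And>x. x \<in> H - {a, b} \<Longrightarrow> b < x"
proof -
  define a where "a = Min H"
  define b where "b = Min (H - {a})"
  have "H - {a} \<noteq> {}"
    using assms card_mono[of "{a}" H] by auto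
  have ab: "a \<in> H" "b \<in> H - {a}"
  proof -
    show "a \<in> H"
      unfolding a_def using assms(1) \<open>H - {a} \<noteq> {}\<close> by (intro Min_in) auto
    show "b \<in> H - {a}"
      unfolding b_def using assms(1) \<open>H - {a} \<noteq> {}\<close> by (intro Min_in) simp_all
  qed
  have "b \<le> x" if "x \<in> H - {a}" for x
    using assms(1) that unfolding b_def by simp
  moreover have "a \<le> b"
    using assms(1) ab(2) unfolding a_def by simp
  ultimately show thesis
    using that[of a b] ab by force
qed

lemma least_and_greatest:
  fixes H :: "nat set"
  assumes "finite H" "2 \<le> card H"
  obtains a b where "a \<in> H" "b \<in> H" "a < b" "\<And>x. x \<in> H - {a, b} \<Longrightarrow> a < x \<and> x < b"
proof -
  obtain x where x: "x \<in> H" "x \<noteq> Min H"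
    using assms card_mono[of "{Min H}" H] by auto
  then have "H \<noteq> {}"
    by blast
  then have "Min H \<in> H" "Max H \<in> H"
    using assms(1) by simp_all
  moreover have "Min H < Max H"
    using x Min_le[OF assms(1) x(1)] Max_ge[OF assms(1) x(1)] by linarith
  moreover have "Min H < y \<and> y < Max H" if "y \<in> H - {Min H, Max H}" for y
    using Min_le[OF assms(1), of y] Max_ge[OF assms(1), of y] that by fastforce
  ultimately show thesis
    using that by blast
qed

lemma card_le_if_least_forbidden:
  fixes H :: "nat set"
  assumes "finite H" "inj_on t H" "\<And>u w. finite (Bad u w) \<and> card (Bad u w) \<le> L"
    and "\<And>a b c. a \<in> H \<Longrightarrow> b \<in> H \<Longrightarrow> c \<in> H \<Longrightarrow> a < b \<Longrightarrow> b < c \<Longrightarrow> t a \<in> Bad (t b) (t c)"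
  shows "card H \<le> L + 2"
proof (cases "card H < 2")
  case False
  then obtain b c where bc: "b \<in> H" "c \<in> H" "b < c" "\<And>x. x \<in> H - {b, c} \<Longrightarrow> x < b"
    using two_largest[OF assms(1)] by (metis not_less)
  have "card H \<le> card (Bad (t b) (t c)) + 2"
    using bc assms(4) by (intro card_le_pinned_pair[OF assms(1) bc(1,2) _ assms(2)]) (auto simp: assms(3))
  with assms(3)[of "t b" "t c"] show ?thesis
    by linarith
qed simp

lemma card_le_if_middle_forbidden:
  fixes H :: "nat set"
  assumes "finite H" "inj_on t H" "\<And>u w. finite (Bad u w) \<and> card (Bad u w) \<le> L"
    and "\<And>a b c. a \<in> H \<Longrightarrow> b \<in> H \<Longrightarrow> c \<in> H \<Longrightarrow> a < b \<Longrightarrow> b < c \<Longrightarrow> t b \<in> Bad (t a) (t c)"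
  shows "card H \<le> L + 2"
proof (cases "card H < 2")
  case False
  then obtain a c where ac: "a \<in> H" "c \<in> H" "a < c" "\<And>x. x \<in> H - {a, c} \<Longrightarrow> a < x \<and> x < c"
    using least_and_greatest[OF assms(1)] by (metis not_less)
  have "card H \<le> card (Bad (t a) (t c)) + 2"
    using ac assms(4) by (intro card_le_pinned_pair[OF assms(1) ac(1,2) _ assms(2)]) (auto simp: assms(3))
  with assms(3)[of "t a" "t c"] show ?thesis
    by linarith
qed simp

lemma card_le_if_greatest_forbidden:
  fixes H :: "nat set"
  assumes "finite H" "inj_on t H" "\<And>u w. finite (Bad u w) \<and> card (Bad u w) \<le> L"
    and "\<And>a b c. a \<in> H \<Longrightarrow> b \<in> H \<Longrightarrow> c \<in> H \<Longrightarrow> a < b \<Longrightarrow> b < c \<Longrightarrow> t c \<in> Bad (t a) (t b)"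
  shows "card H \<le> L + 2"
proof (cases "card H < 2")
  case False
  then obtain a b where ab: "a \<in> H" "b \<in> H" "a < b" "\<And>x. x \<in> H - {a, b} \<Longrightarrow> b < x"
    using two_smallest[OF assms(1)] by (metis not_less)
  have "card H \<le> card (Bad (t a) (t b)) + 2"
    using ab assms(4) by (intro card_le_pinned_pair[OF assms(1) ab(1,2) _ assms(2)]) (auto simp: assms(3))
  with assms(3)[of "t a" "t b"] show ?thesis
    by linarith
qed simp

lemma ramsey_triple_avoiding_subset:
  fixes K L :: nat
  obtains N where "\<And>(T :: 'a set) (Bad :: 'a \<Rightarrow> 'a \<Rightarrow> 'a set). finite T \<Longrightarrow> N \<le> card T \<Longrightarrow>
    (\<And>u w. finite (Bad u w) \<and> card (Bad u w) \<le> L) \<Longrightarrow>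
    \<exists>X\<subseteq>T. card X = K \<and> (\<forall>u\<in>X. \<forall>w\<in>X. \<forall>z\<in>X. u \<noteq> w \<longrightarrow> z \<noteq> u \<longrightarrow> z \<noteq> w \<longrightarrow> z \<notin> Bad u w)"
proof -
  define m where "m = K + 2 * L + 3"
  obtain N where N: "\<And>f :: nat \<Rightarrow> nat \<Rightarrow> nat \<Rightarrow> nat. (\<And>a b c. f a b c < 4) \<Longrightarrow>
    \<exists>H\<subseteq>{..<N}. card H = m \<and> (\<exists>i. \<forall>a\<in>H. \<forall>b\<in>H. \<forall>c\<in>H. a < b \<longrightarrow> b < c \<longrightarrow> f a b c = i)"
    by (rule ramsey_ordered_triples[where n = 4 and m = m]) (erule that)
  show thesis
  proof (rule that)
    fix T :: "'a set" and Bad :: "'a \<Rightarrow> 'a \<Rightarrow> 'a set"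
    assume T: "finite T" "N \<le> card T" and Bad: "\<And>u w. finite (Bad u w) \<and> card (Bad u w) \<le> L"
    define Bad' where "Bad' u w = Bad u w \<union> Bad w u" for u w
    have Bad'_sym: "Bad' u w = Bad' w u" for u w
      unfolding Bad'_def by blast
    have Bad'_card: "finite (Bad' u w) \<and> card (Bad' u w) \<le> 2 * L" for u w
      using Bad[of u w] Bad[of w u] card_Un_le[of "Bad u w" "Bad w u"] by (auto simp: Bad'_def)
    obtain t where t: "t ` {..<N} \<subseteq> T" "inj_on t {..<N}"
      using card_le_inj[of "{..<N}" T] T by auto
    define f where "f a b c = (if t a \<in> Bad' (t b) (t c) then 1 else if t b \<in> Bad' (t a) (t c) then 2
      else if t c \<in> Bad' (t a) (t b) then 3 else (0 :: nat))" for a b c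
    obtain H i where H: "H \<subseteq> {..<N}" "card H = m"
      and Hi: "\<And>a b c. a \<in> H \<Longrightarrow> b \<in> H \<Longrightarrow> c \<in> H \<Longrightarrow> a < b \<Longrightarrow> b < c \<Longrightarrow> f a b c = i"
      using N[of f] unfolding f_def by fastforce
    have Hfin: "finite H" and tH: "inj_on t H"
      using H(1) finite_subset inj_on_subset[OF t(2)] by auto
    have f_cases: "f a b c = 1 \<Longrightarrow> t a \<in> Bad' (t b) (t c)" "f a b c = 2 \<Longrightarrow> t b \<in> Bad' (t a) (t c)"
        "f a b c = 3 \<Longrightarrow> t c \<in> Bad' (t a) (t b)"
        "f a b c = 0 \<Longrightarrow> t a \<notin> Bad' (t b) (t c) \<and> t b \<notin> Bad' (t a) (t c) \<and> t c \<notin> Bad' (t a) (t b)"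
      for a b c
      unfolding f_def by (cases "t a \<in> Bad' (t b) (t c)"; cases "t b \<in> Bad' (t a) (t c)";
          cases "t c \<in> Bad' (t a) (t b)"; simp)+
    have f_range: "f a b c \<in> {0, 1, 2, 3}" for a b c
      unfolding f_def by simp
    \<comment> \<open>A bad colour would pin a pair of \<open>H\<close> whose forbidden set contains the other
      \<open>m - 2 > 2 * L\<close> elements.\<close>
    have "i = 0"
    proof (rule ccontr)
      assume "i \<noteq> 0"
      consider "i = 2" | "i = 3" | "i \<noteq> 2" "i \<noteq> 3"
        by blast
      then have "card H \<le> 2 * L + 2"
      proof cases
        case 1
        have "t b \<in> Bad' (t a) (t c)" if "a \<in> H" "b \<in> H" "c \<in> H" "a < b" "b < c" for a b c
          using f_cases(2)[of a b c] Hi[OF that] 1 by simp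
        then show ?thesis
          by (rule card_le_if_middle_forbidden[where Bad = Bad', OF Hfin tH Bad'_card])
      next
        case 2
        have "t c \<in> Bad' (t a) (t b)" if "a \<in> H" "b \<in> H" "c \<in> H" "a < b" "b < c" for a b c
          using f_cases(3)[of a b c] Hi[OF that] 2 by simp
        then show ?thesis
          by (rule card_le_if_greatest_forbidden[where Bad = Bad', OF Hfin tH Bad'_card])
      next
        case 3
        have "t a \<in> Bad' (t b) (t c)" if "a \<in> H" "b \<in> H" "c \<in> H" "a < b" "b < c" for a b c
          using f_cases(1)[of a b c] f_range[of a b c] Hi[OF that] 3 \<open>i \<noteq> 0\<close> by auto
        then show ?thesis
          by (rule card_le_if_least_forbidden[where Bad = Bad', OF Hfin tH Bad'_card])
      qed
      then show False
        using H(2) unfolding m_def by linarith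
    qed
    have good: "t z \<notin> Bad' (t x) (t y)"
      if xyz: "x < y" "x \<in> H" "y \<in> H" "z \<in> H" "z \<noteq> x" "z \<noteq> y" for x y z
    proof -
      consider "z < x" | "x < z" "z < y" | "y < z"
        using xyz by linarith
      then show ?thesis
        by cases (use f_cases(4)[of z x y] f_cases(4)[of x z y] f_cases(4)[of x y z] Hi xyz \<open>i = 0\<close> Bad'_sym
            in auto)
    qed
    obtain H' where H': "H' \<subseteq> H" "card H' = K"
      using obtain_subset_with_card_n[of K H] H(2) m_def by auto
    show "\<exists>X\<subseteq>T. card X = K \<and> (\<forall>u\<in>X. \<forall>w\<in>X. \<forall>z\<in>X. u \<noteq> w \<longrightarrow> z \<noteq> u \<longrightarrow> z \<noteq> w \<longrightarrow> z \<notin> Bad u w)"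
    proof (intro exI[of _ "t ` H'"] conjI ballI impI)
      show "t ` H' \<subseteq> T" "card (t ` H') = K"
        using H' H(1) t card_image[OF inj_on_subset[OF tH H'(1)]] by auto
    next
      fix u w z assume "u \<in> t ` H'" "w \<in> t ` H'" "z \<in> t ` H'" "u \<noteq> w" "z \<noteq> u" "z \<noteq> w"
      then obtain x y v where "x \<in> H" "y \<in> H" "v \<in> H" "u = t x" "w = t y" "z = t v"
          "x \<noteq> y" "v \<noteq> x" "v \<noteq> y"
        using H'(1) by blast
      then show "z \<notin> Bad u w"
        using good[of x y v] good[of y x v] Bad'_sym unfolding Bad'_def
        by (cases "x < y") auto
    qed
  qed
qed

lemma ramsey_avoiding_subset:
  fixes K L :: nat
  obtains N where "\<And>(T :: 'a set) (Bad :: 'a \<Rightarrow> 'a \<Rightarrow> 'a set) (Rch :: 'a \<Rightarrow> 'a set).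
    finite T \<Longrightarrow> N \<le> card T \<Longrightarrow>
    (\<And>u w. finite (Bad u w) \<and> card (Bad u w) \<le> L) \<Longrightarrow> (\<And>u. finite (Rch u) \<and> card (Rch u) \<le> L) \<Longrightarrow>
    \<exists>X\<subseteq>T. card X = K \<and> (\<forall>u\<in>X. \<forall>w\<in>X. \<forall>z\<in>X. u \<noteq> w \<longrightarrow> z \<noteq> u \<longrightarrow> z \<noteq> w \<longrightarrow> z \<notin> Bad u w)
      \<and> (\<forall>u\<in>X. \<forall>w\<in>X. u \<noteq> w \<longrightarrow> w \<notin> Rch u)"
proof -
  obtain N where N: "\<And>(T :: 'a set) (Bad :: 'a \<Rightarrow> 'a \<Rightarrow> 'a set). finite T \<Longrightarrow> N \<le> card T \<Longrightarrow>
    (\<And>u w. finite (Bad u w) \<and> card (Bad u w) \<le> 2 * L) \<Longrightarrow>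
    \<exists>X\<subseteq>T. card X = K + 2 \<and> (\<forall>u\<in>X. \<forall>w\<in>X. \<forall>z\<in>X. u \<noteq> w \<longrightarrow> z \<noteq> u \<longrightarrow> z \<noteq> w \<longrightarrow> z \<notin> Bad u w)"
    by (rule ramsey_triple_avoiding_subset[where K = "K + 2" and L = "2 * L"]) (erule that)
  show thesis
  proof (rule that)
    fix T :: "'a set" and Bad :: "'a \<Rightarrow> 'a \<Rightarrow> 'a set" and Rch :: "'a \<Rightarrow> 'a set"
    assume T: "finite T" "N \<le> card T" and Bad: "\<And>u w. finite (Bad u w) \<and> card (Bad u w) \<le> L"
      and Rch: "\<And>u. finite (Rch u) \<and> card (Rch u) \<le> L"
    have "finite (Bad u w \<union> Rch u) \<and> card (Bad u w \<union> Rch u) \<le> 2 * L" for u w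
      using Bad[of u w] Rch[of u] card_Un_le[of "Bad u w" "Rch u"] by auto
    then obtain Y where Y: "Y \<subseteq> T" "card Y = K + 2"
        "\<forall>u\<in>Y. \<forall>w\<in>Y. \<forall>z\<in>Y. u \<noteq> w \<longrightarrow> z \<noteq> u \<longrightarrow> z \<noteq> w \<longrightarrow> z \<notin> Bad u w \<union> Rch u"
      using N[OF T, of "\<lambda>u w. Bad u w \<union> Rch u"] by blast
    obtain X where X: "X \<subseteq> Y" "card X = K"
      using obtain_subset_with_card_n[of K Y] Y(2) by auto
    \<comment> \<open>The two spare elements of \<open>Y\<close> turn the pair condition into a triple condition.\<close>
    have "w \<notin> Rch u" if "u \<in> X" "w \<in> X" "u \<noteq> w" for u w
    proof -
      have "finite X"
        using finite_subset[OF X(1) finite_subset[OF Y(1) T(1)]] .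
      then have "2 \<le> K"
        using card_mono[of X "{u, w}"] that X(2) by simp
      have "{u, w} \<subseteq> Y"
        using X(1) that by auto
      then have "card (Y - {u, w}) = K"
        using card_Diff_subset[of "{u, w}" Y] that Y(2) by simp
      with \<open>2 \<le> K\<close> have "0 < card (Y - {u, w})"
        by linarith
      then have "Y - {u, w} \<noteq> {}"
        unfolding card_gt_0_iff by blast
      then obtain z where z: "z \<in> Y" "z \<noteq> u" "z \<noteq> w"
        by blast
      have "u \<in> Y" "w \<in> Y"
        using X(1) that by auto
      with Y(3) z that(3) have "w \<notin> Bad u z \<union> Rch u"
        by simp
      then show ?thesis
        by simp
    qed
    with X Y(1,3) show "\<exists>X\<subseteq>T. card X = K \<and> (\<forall>u\<in>X. \<forall>w\<in>X. \<forall>z\<in>X. u \<noteq> w \<longrightarrow> z \<noteq> u \<longrightarrow> z \<noteq> w \<longrightarrow> z \<notin> Bad u w)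
      \<and> (\<forall>u\<in>X. \<forall>w\<in>X. u \<noteq> w \<longrightarrow> w \<notin> Rch u)"
      by (intro exI[of _ X] conjI; blast)
  qed
qed

definition far_apart :: "('a \<times> 'a) set \<Rightarrow> nat \<Rightarrow> ('a \<Rightarrow> 'a \<Rightarrow> 'a) \<Rightarrow> 'a set \<Rightarrow> bool" where
  "far_apart E r centre X \<longleftrightarrow>
     (\<forall>u\<in>X. \<forall>w\<in>X. \<forall>z\<in>X. u \<noteq> w \<longrightarrow> z \<noteq> u \<longrightarrow> z \<noteq> w \<longrightarrow> \<not> reach_within E (2 * r) (centre u w) z)
   \<and> (\<forall>u\<in>X. \<forall>w\<in>X. u \<noteq> w \<longrightarrow> \<not> reach_within E r u w)"

lemma crown_depth_minor_of_terminals: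
  fixes X :: "'a set" and c :: "'a \<Rightarrow> 'a \<Rightarrow> 'a"
  assumes "E \<subseteq> V \<times> V" "X \<subseteq> V" "finite X" "card X = K"
    and centre: "\<And>u w. u \<in> X \<Longrightarrow> w \<in> X \<Longrightarrow> u \<noteq> w \<Longrightarrow>
      c u w \<in> V \<and> reach_within E r (c u w) u \<and> reach_within E r (c u w) w"
    and "far_apart E r c X"
  shows "depth_minor r (crown_V K) (crown_E K) V E"
proof -
  have far: "\<And>u w z. u \<in> X \<Longrightarrow> w \<in> X \<Longrightarrow> z \<in> X \<Longrightarrow> u \<noteq> w \<Longrightarrow> z \<noteq> u \<Longrightarrow> z \<noteq> w \<Longrightarrow>
      \<not> reach_within E (2 * r) (c u w) z"
    and apart: "\<And>u w. u \<in> X \<Longrightarrow> w \<in> X \<Longrightarrow> u \<noteq> w \<Longrightarrow> \<not> reach_within E r u w"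
    using assms(6) unfolding far_apart_def by blast+
  obtain g where g: "bij_betw g {1..K} X"
    using ex_bij_betw_nat_finite_1[OF assms(3)] assms(4) by blast
  have gX: "g i \<in> X" if "i \<in> {1..K}" for i
    using bij_betwE[OF g] that by blast
  have g_inj: "g i \<noteq> g j" if "i \<in> {1..K}" "j \<in> {1..K}" "i \<noteq> j" for i j
    using bij_betw_imp_inj_on[OF g] that by (auto dest: inj_onD)
  define s where "s i j = c (g (min i j)) (g (max i j))" for i j
  have s: "s i j \<in> V \<and> reach_within E r (s i j) (g i) \<and> reach_within E r (s i j) (g j)"
    if "i \<in> {1..K}" "j \<in> {1..K}" "i \<noteq> j" for i j
    using centre[of "g (min i j)" "g (max i j)"] gX g_inj that
    by (cases "i < j") (auto simp: s_def min_def max_def)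
  interpret crown_centres V E r K g s
  proof
    show "E \<subseteq> V \<times> V"
      by (fact assms(1))
    show "g i \<in> V" if "i \<in> {1..K}" for i
      using gX[OF that] assms(2) by blast
    show "s i j = s j i" for i j
      by (simp add: s_def min.commute max.commute)
    show "s i j \<in> V" "reach_within E r (s i j) (g i)" if "i \<in> {1..K}" "j \<in> {1..K}" "i \<noteq> j" for i j
      using s[OF that] by blast+
    show "\<not> reach_within E r (g i) (g j)" if "i \<in> {1..K}" "j \<in> {1..K}" "i \<noteq> j" for i j
      using apart[OF gX[OF that(1)] gX[OF that(2)] g_inj[OF that]] .
    show "\<not> reach_within E (2 * r) (s i j) (g k)"
      if "i \<in> {1..K}" "j \<in> {1..K}" "k \<in> {1..K}" "i \<noteq> j" "k \<noteq> i" "k \<noteq> j" for i j k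
      using far[of "g (min i j)" "g (max i j)" "g k"] gX g_inj that
      by (cases "i < j") (auto simp: s_def min_def max_def)
  qed
  show ?thesis
    by (rule crown_depth_minor)
qed

lemma far_apart_terminals:
  fixes c r K :: nat
  obtains N where "\<And>V E (T :: 'a set) (centre :: 'a \<Rightarrow> 'a \<Rightarrow> 'a).
    digraph V E \<Longrightarrow> max_outdeg_le V E c \<Longrightarrow> T \<subseteq> V \<Longrightarrow> N \<le> card T \<Longrightarrow>
    \<exists>X\<subseteq>T. card X = K \<and> far_apart E r centre X"
proof -
  define L where "L = (\<Sum>i\<le>2 * r. c ^ i)"
  obtain N where N: "\<And>(T :: 'a set) (Bad :: 'a \<Rightarrow> 'a \<Rightarrow> 'a set) (Rch :: 'a \<Rightarrow> 'a set).
    finite T \<Longrightarrow> N \<le> card T \<Longrightarrow>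
    (\<And>u w. finite (Bad u w) \<and> card (Bad u w) \<le> L) \<Longrightarrow> (\<And>u. finite (Rch u) \<and> card (Rch u) \<le> L) \<Longrightarrow>
    \<exists>X\<subseteq>T. card X = K \<and> (\<forall>u\<in>X. \<forall>w\<in>X. \<forall>z\<in>X. u \<noteq> w \<longrightarrow> z \<noteq> u \<longrightarrow> z \<noteq> w \<longrightarrow> z \<notin> Bad u w)
      \<and> (\<forall>u\<in>X. \<forall>w\<in>X. u \<noteq> w \<longrightarrow> w \<notin> Rch u)"
    by (rule ramsey_avoiding_subset[where K = K and L = L]) (erule that)
  show thesis
  proof (rule that)
    fix V E and T :: "'a set" and centre :: "'a \<Rightarrow> 'a \<Rightarrow> 'a"
    assume G: "digraph V E" "max_outdeg_le V E c" and T: "T \<subseteq> V" "N \<le> card T"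
    have fin: "finite T"
      using G(1) T(1) finite_subset unfolding digraph_def by blast
    have ball: "finite {z. reach_within E k x z} \<and> card {z. reach_within E k x z} \<le> L"
      if "k \<le> 2 * r" for k x
    proof -
      have "(\<Sum>i\<le>k. c ^ i) \<le> L"
        unfolding L_def by (rule sum_mono2) (use that in auto)
      then show ?thesis
        using card_reach_within_le[OF G, of k x] by linarith
    qed
    show "\<exists>X\<subseteq>T. card X = K \<and> far_apart E r centre X"
      using N[OF fin T(2), of "\<lambda>u w. {z. reach_within E (2 * r) (centre u w) z}" "\<lambda>u. {z. reach_within E r u z}"]
        ball[of "2 * r"] ball[of r] unfolding far_apart_def by auto
  qed
qed

theorem mainTheorem16:
  fixes r c K :: nat
  shows "\<exists>N::nat. \<forall>(V :: 'a set) E S T.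
     digraph V E \<and> max_outdeg_le V E c \<and> S \<subseteq> V \<and> T \<subseteq> V \<and> card T \<ge> N
     \<and> (\<forall>t\<in>T. \<forall>t'\<in>T. \<exists>s\<in>S. path_le E r s t \<and> path_le E r s t')
     \<longrightarrow> depth_minor r (crown_V K) (crown_E K) V E"
proof -
  obtain N where N: "\<And>V E (T :: 'a set) (centre :: 'a \<Rightarrow> 'a \<Rightarrow> 'a).
    digraph V E \<Longrightarrow> max_outdeg_le V E c \<Longrightarrow> T \<subseteq> V \<Longrightarrow> N \<le> card T \<Longrightarrow>
    \<exists>X\<subseteq>T. card X = K \<and> far_apart E r centre X"
    by (rule far_apart_terminals[where c = c and r = r and K = K]) (erule that)
  show ?thesis
  proof (intro exI[of _ N] allI impI, elim conjE)
    fix V :: "'a set" and E S T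
    assume G: "digraph V E" "max_outdeg_le V E c" and ST: "S \<subseteq> V" "T \<subseteq> V" "N \<le> card T"
      and centres: "\<forall>t\<in>T. \<forall>t'\<in>T. \<exists>s\<in>S. path_le E r s t \<and> path_le E r s t'"
    obtain centre where centre: "\<And>u w. u \<in> T \<Longrightarrow> w \<in> T \<Longrightarrow>
        centre u w \<in> S \<and> reach_within E r (centre u w) u \<and> reach_within E r (centre u w) w"
      using centres path_le_imp_reach_within by metis
    obtain X where X: "X \<subseteq> T" "card X = K" "far_apart E r centre X"
      using N[OF G ST(2,3), of centre] by blast
    have XV: "X \<subseteq> V" and EV: "E \<subseteq> V \<times> V" and "finite V"
      using G(1) X(1) ST(2) unfolding digraph_def by auto
    then have "finite X"
      using finite_subset by blast
    with XV EV X(2,3) show "depth_minor r (crown_V K) (crown_E K) V E"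
      using centre X(1) ST(1) by (intro crown_depth_minor_of_terminals[where c = centre]) blast+
  qed
qed

end
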